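(* Let $\lambda_{\max}>1$ and let $F:[0,\lambda_{\max}]\to\mathbb{R}_+$ be continuously differentiable with $F(0)=0$, such that $F(x)<F^\star$ for all $x\in[0,1)$ and $F'(1)>0$. Suppose $x_1^\star\in(1,\lambda_{\max}]$, $x_2^\star\in[0,1)$, $p^\star\in(0,1)$ are such that the measure $\alpha(\{x_1^\star\})=p^\star$, $\alpha(\{x_2^\star\})=1-p^\star$ is an optimal solution of the problem defining $F^\star$. Let $\varepsilon>0$. Then for every stable control policy $\lambda$ with $R(\lambda)\le\varepsilon$, $$\mathbb{E}_\pi[\lambda(\bar q)]=1-\pi_0\ge 1-\frac{x_1^\star-x_2^\star}{F(x_1^\star)-F(x_2^\star)}\,\varepsilon.$$
   Context: A control policy is a function $\lambda:\mathbb{Z}_+\to[0,\lambda_{\max}]$; it defines a continuous-time birth–death chain on $\mathbb{Z}_+$ with rate $\lambda(q)$ from $q$ to $q+1$ and rate $1$ from $q$ to $q-1$ ($q\ge1$). Let $\mathcal S$ be the set of states reachable from $0$. The policy is stable if $\sum_{i\in\mathcal S}\prod_{q=0}^{i}\lambda(q)<\infty$ (positive recurrence on $\mathcal S$); then $\pi$ is its stationary distribution (with $\pi_0$ the mass at state $0$) and $\bar q\sim\pi$. $F^\star=\sup\{\mathbb{E}_\alpha[F(X)]:\alpha$ a probability measure on $[0,\lambda_{\max}]$, $X\sim\alpha$, $\mathbb{E}_\alpha[X]\le1\}$; regret $R(\lambda)=F^\star-\mathbb{E}_\pi[F(\lambda(\bar q))]$. *)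

theory Defs
  imports "HOL-Probability.Probability"
begin

definition reach :: "(nat \<Rightarrow> real) \<Rightarrow> nat set" where
  "reach lam = {i. \<forall>q<i. lam q > 0}"

definition stable :: "(nat \<Rightarrow> real) \<Rightarrow> bool" where
  "stable lam \<longleftrightarrow> (\<lambda>i. \<Prod>q\<in>{0..i}. lam q) summable_on reach lam"

text \<open>Stationary distribution of the birth-death chain on the reachable set
  (detailed balance: pi i proportional to prod_{q<i} lam q).\<close>
definition stat_dist :: "(nat \<Rightarrow> real) \<Rightarrow> nat \<Rightarrow> real" where
  "stat_dist lam i =
     (if i \<in> reach lam
      then (\<Prod>q<i. lam q) / (\<Sum>\<^sub>\<infinity> j\<in>reach lam. \<Prod>q<j. lam q)
      else 0)"

definition control_policy :: "real \<Rightarrow> (nat \<Rightarrow> real) \<Rightarrow> bool" where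
  "control_policy lmax lam \<longleftrightarrow> (\<forall>q. 0 \<le> lam q \<and> lam q \<le> lmax)"

definition Fstar :: "real \<Rightarrow> (real \<Rightarrow> real) \<Rightarrow> real" where
  "Fstar lmax F = Sup {(LINT x:{0..lmax}|\<alpha>. F x) | \<alpha>.
      prob_space \<alpha> \<and> sets \<alpha> = sets borel \<and> measure \<alpha> {0..lmax} = 1 \<and>
      (LINT x:{0..lmax}|\<alpha>. x) \<le> 1}"

definition regret :: "real \<Rightarrow> (real \<Rightarrow> real) \<Rightarrow> (nat \<Rightarrow> real) \<Rightarrow> real" where
  "regret lmax F lam = Fstar lmax F - (\<Sum>\<^sub>\<infinity> i\<in>reach lam. stat_dist lam i * F (lam i))"

end

theory Submission imports Defs begin

text \<open>Optimality of the two-point law makes the chord \<open>L\<close> of \<open>F\<close> through \<open>x\<^sub>2\<close> and \<open>x\<^sub>1\<close> a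
  supporting line at mean 1: \<open>F \<le> L\<close> on \<open>[0, lmax]\<close> and \<open>L 1 = F\<^sup>*\<close>, since a point of the graph
  above \<open>L\<close> could be mixed with \<open>x\<^sub>1\<close> or \<open>x\<^sub>2\<close> into a feasible law beating \<open>F\<^sup>*\<close>.
  Detailed balance gives \<open>\<pi>\<^sub>i \<lambda>(i) = \<pi>\<^sub>i\<^sub>+\<^sub>1\<close>, hence \<open>E\<^sub>\<pi>[\<lambda>(q)] = 1 - \<pi>\<^sub>0\<close>, and since \<open>L\<close> is affine
  \<open>E\<^sub>\<pi>[F(\<lambda>(q))] \<le> L(1 - \<pi>\<^sub>0) = F\<^sup>* - s \<pi>\<^sub>0\<close>, where \<open>s > 0\<close> is the slope of \<open>L\<close>.
  So the regret is at least \<open>s \<pi>\<^sub>0\<close>.\<close>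

lemma nonneg_sums_imp_has_sum_on:
  fixes g :: "nat \<Rightarrow> real"
  assumes "g sums s" and "\<And>i. 0 \<le> g i" and "\<And>i. i \<notin> A \<Longrightarrow> g i = 0"
  shows "(g has_sum s) A"
  by (rule has_sum_cong_neutral[THEN iffD2, OF _ _ _ sums_nonneg_imp_has_sum[OF assms(1,2)]])
     (use assms(3) in auto)

lemma has_sum_affine_mean:
  fixes \<pi> x :: "'a \<Rightarrow> real"
  assumes "(\<pi> has_sum 1) A" and "((\<lambda>i. \<pi> i * x i) has_sum m) A"
  shows "((\<lambda>i. \<pi> i * (c + d * x i)) has_sum (c + d * m)) A"
  using has_sum_add[OF has_sum_cmult_right[OF assms(1), of c] has_sum_cmult_right[OF assms(2), of d]]
  by (simp add: algebra_simps)

lemma Fstar_candidates_bdd_above: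
  fixes F :: "real \<Rightarrow> real"
  assumes "bdd_above (F ` {0..lmax})"
  shows "bdd_above {(LINT x:{0..lmax}|\<alpha>. F x) | \<alpha>.
      prob_space \<alpha> \<and> sets \<alpha> = sets borel \<and> measure \<alpha> {0..lmax} = 1 \<and>
      (LINT x:{0..lmax}|\<alpha>. x) \<le> 1}"
proof -
  obtain B0 where "\<forall>x\<in>{0..lmax}. F x \<le> B0"
    using assms by (auto simp: bdd_above_def)
  then have B: "\<And>x. x \<in> {0..lmax} \<Longrightarrow> F x \<le> max B0 0" and "0 \<le> max B0 0"
    by (auto intro: max.coboundedI1)
  have "(LINT x:{0..lmax}|\<alpha>. F x) \<le> max B0 0" if "prob_space \<alpha>" for \<alpha> :: "real measure"
  proof (cases "integrable \<alpha> (\<lambda>x. indicator {0..lmax} x *\<^sub>R F x)")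
    case True
    moreover have "indicator {0..lmax} x *\<^sub>R F x \<le> max B0 0" for x
      using B \<open>0 \<le> max B0 0\<close> by (auto simp: indicator_def)
    ultimately show ?thesis
      unfolding set_lebesgue_integral_def using prob_space.integral_le_const[OF that] by simp
  qed (use \<open>0 \<le> max B0 0\<close> in \<open>simp add: set_lebesgue_integral_def not_integrable_integral_eq\<close>)
  then show ?thesis
    by (intro bdd_aboveI[of _ "max B0 0"]) blast
qed

lemma two_point_le_Fstar:
  fixes F :: "real \<Rightarrow> real"
  assumes contF: "continuous_on {0..lmax} F"
    and a: "a \<in> {0..lmax}" and b: "b \<in> {0..lmax}" and q: "q \<in> {0..1}"
    and mean: "q * a + (1 - q) * b \<le> 1"
  shows "q * F a + (1 - q) * F b \<le> Fstar lmax F"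
proof -
  define P where "P = map_pmf (\<lambda>c. if c then a else b) (bernoulli_pmf q)"
  define \<alpha> where "\<alpha> = distr (measure_pmf P) borel id"
  have prob: "prob_space \<alpha>"
    unfolding \<alpha>_def by (simp add: prob_space.prob_space_distr measure_pmf.prob_space_axioms)
  have sets: "sets \<alpha> = sets borel"
    unfolding \<alpha>_def by simp
  have "set_pmf P \<subseteq> {0..lmax}"
    unfolding P_def using a b by auto
  then have supported: "measure \<alpha> {0..lmax} = 1"
    unfolding \<alpha>_def by (simp add: measure_distr measure_pmf.prob_eq_1 AE_measure_pmf_iff subset_eq)
  have two_point_integral: "(LINT x:{0..lmax}|\<alpha>. g x) = q * g a + (1 - q) * g b"
    if "continuous_on {0..lmax} g" for g :: "real \<Rightarrow> real"
  proof -
    have "(\<lambda>x. indicator {0..lmax} x *\<^sub>R g x) \<in> borel_measurable borel"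
      by (rule borel_measurable_continuous_on_indicator) (use that in auto)
    then show ?thesis
      unfolding set_lebesgue_integral_def \<alpha>_def using q a b by (simp add: integral_distr P_def)
  qed
  have "(LINT x:{0..lmax}|\<alpha>. x) = q * a + (1 - q) * b"
    by (rule two_point_integral) (rule continuous_on_id)
  then have "q * F a + (1 - q) * F b \<in> {(LINT x:{0..lmax}|\<alpha>. F x) | \<alpha>.
      prob_space \<alpha> \<and> sets \<alpha> = sets borel \<and> measure \<alpha> {0..lmax} = 1 \<and>
      (LINT x:{0..lmax}|\<alpha>. x) \<le> 1}"
    using prob sets supported mean two_point_integral[OF contF] by (intro CollectI exI[of _ \<alpha>]) simp
  moreover have "bdd_above (F ` {0..lmax})"
    using compact_continuous_image[OF contF compact_Icc]
    by (simp add: bounded_imp_bdd_above compact_imp_bounded)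
  ultimately show ?thesis
    unfolding Fstar_def by (rule cSup_upper[OF _ Fstar_candidates_bdd_above])
qed

locale two_point_optimum =
  fixes lmax V :: real and F :: "real \<Rightarrow> real" and x1 x2 p :: real
  assumes two_point_le: "\<lbrakk>a \<in> {0..lmax}; b \<in> {0..lmax}; q \<in> {0..1}; q * a + (1 - q) * b \<le> 1\<rbrakk>
      \<Longrightarrow> q * F a + (1 - q) * F b \<le> V"
    and x1: "1 < x1" "x1 \<le> lmax" and x2: "0 \<le> x2" "x2 < 1" and p: "0 < p" "p < 1"
    and feasible: "p * x1 + (1 - p) * x2 \<le> 1"
    and optimal: "p * F x1 + (1 - p) * F x2 = V"
    and F_x2_less: "F x2 < V"
begin

lemma F_x2_less_F_x1: "F x2 < F x1"
proof (rule ccontr)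
  assume "\<not> F x2 < F x1"
  then have "p * F x1 \<le> p * F x2"
    using p by (simp add: mult_left_mono)
  then show False
    using optimal F_x2_less by (simp add: algebra_simps)
qed

definition chord_slope :: real where
  "chord_slope = (F x1 - F x2) / (x1 - x2)"

definition chord :: "real \<Rightarrow> real" where
  "chord y = F x2 + chord_slope * (y - x2)"

lemma chord_slope_pos: "0 < chord_slope"
  unfolding chord_slope_def using F_x2_less_F_x1 x1 x2 by simp

lemma chord_x1: "chord x1 = F x1"
  unfolding chord_def chord_slope_def using x1 x2 by (simp add: field_simps)

lemma chord_x2: "chord x2 = F x2"
  by (simp add: chord_def)

lemma chord_eq_affine: "chord y = (F x2 - chord_slope * x2) + chord_slope * y"
  by (simp add: chord_def algebra_simps)

lemma chord_affine: "(b - 1) * chord a + (1 - a) * chord b = (b - a) * chord 1"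
  by (simp add: chord_eq_affine algebra_simps)

text \<open>The mixture of \<open>a\<close> and \<open>b\<close> with mean exactly 1, denominators cleared.\<close>
lemma mix_at_1_le:
  assumes "a \<in> {0..lmax}" "b \<in> {0..lmax}" "a \<le> 1" "1 \<le> b" "a < b"
  shows "(b - 1) * F a + (1 - a) * F b \<le> (b - a) * V"
proof -
  define q where "q = (b - 1) / (b - a)"
  have q_scaled: "q * (b - a) = b - 1"
    unfolding q_def using assms by simp
  have "q \<in> {0..1}"
    unfolding q_def using assms by auto
  moreover have "q * a + (1 - q) * b = b - q * (b - a)"
    by (simp add: algebra_simps)
  ultimately have "q * F a + (1 - q) * F b \<le> V"
    using assms two_point_le q_scaled by simp
  then have "(b - a) * (q * F a + (1 - q) * F b) \<le> (b - a) * V"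
    using assms by (simp add: mult_left_mono)
  moreover have "(b - a) * (q * F a + (1 - q) * F b) = q * (b - a) * F a + (b - a - q * (b - a)) * F b"
    by (simp add: algebra_simps)
  ultimately show ?thesis
    unfolding q_scaled by simp
qed

lemma mean_eq_1: "p * x1 + (1 - p) * x2 = 1"
proof -
  have "(x1 - 1) * F x2 + (1 - x2) * F x1 \<le> (x1 - x2) * V"
    using mix_at_1_le x1 x2 by simp
  then have "0 \<le> (p * x1 + (1 - p) * x2 - 1) * (F x1 - F x2)"
    unfolding optimal[symmetric] by (simp add: algebra_simps)
  then show ?thesis
    using feasible F_x2_less_F_x1 by (simp add: zero_le_mult_iff)
qed

lemma chord_1: "chord 1 = V"
proof -
  have "1 - x2 = p * (x1 - x2)"
    using mean_eq_1 by (simp add: algebra_simps)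
  then have "chord 1 = F x2 + chord_slope * (x1 - x2) * p"
    unfolding chord_def by simp
  also have "\<dots> = F x2 + (F x1 - F x2) * p"
    unfolding chord_slope_def using x1 x2 by simp
  finally show ?thesis
    using optimal by (simp add: algebra_simps)
qed

lemma F_le_chord:
  assumes y: "y \<in> {0..lmax}"
  shows "F y \<le> chord y"
proof (cases "y < 1")
  case True
  have "(x1 - 1) * F y + (1 - y) * F x1 \<le> (x1 - y) * chord 1"
    using mix_at_1_le[of y x1] y x1 True by (simp add: chord_1)
  then have "(x1 - 1) * F y \<le> (x1 - 1) * chord y"
    unfolding chord_affine[symmetric] chord_x1 by simp
  then show ?thesis
    using x1 by simp
next
  case False
  have "(y - 1) * F x2 + (1 - x2) * F y \<le> (y - x2) * chord 1"
    using mix_at_1_le[of x2 y] y x2 False by (simp add: chord_1)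
  then have "(1 - x2) * F y \<le> (1 - x2) * chord y"
    unfolding chord_affine[symmetric] chord_x2 by simp
  then show ?thesis
    using x2 by simp
qed

end

lemma prod_rates_eq_0_outside_reach:
  assumes "\<And>q. 0 \<le> lam q" and "i \<notin> reach lam"
  shows "(\<Prod>q<i. lam q) = 0"
proof -
  obtain q where "q < i" "lam q \<le> 0"
    using assms(2) by (auto simp: reach_def not_less)
  then show ?thesis
    using assms(1)[of q] by (auto simp: prod_zero_iff)
qed

lemma summable_prod_rates:
  assumes nonneg: "\<And>q. 0 \<le> lam q" and "stable lam"
  shows "summable (\<lambda>i. \<Prod>q<i. lam q)"
proof -
  define w where "w i = (\<Prod>q<i. lam q)" for i
  have "(\<lambda>i. w (Suc i)) summable_on reach lam"
    using \<open>stable lam\<close> by (simp add: stable_def w_def atLeast0AtMost lessThan_Suc_atMost)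
  moreover have "w (Suc i) = 0" if "i \<notin> reach lam" for i
    using prod_rates_eq_0_outside_reach[OF nonneg] that by (auto simp: w_def reach_def)
  ultimately have "(\<lambda>i. w (Suc i)) summable_on UNIV"
    by (subst summable_on_cong_neutral[where T = "reach lam"]) auto
  then have "summable (\<lambda>i. w (Suc i))"
    by (rule summable_on_imp_summable)
  then show ?thesis
    unfolding w_def[symmetric] by (simp only: summable_Suc_iff)
qed

lemma stat_dist_eq:
  assumes nonneg: "\<And>q. 0 \<le> lam q" and "stable lam"
  shows "stat_dist lam i = (\<Prod>q<i. lam q) / (\<Sum>j. \<Prod>q<j. lam q)"
proof -
  have "((\<lambda>j. \<Prod>q<j. lam q) has_sum (\<Sum>j. \<Prod>q<j. lam q)) (reach lam)"
    using summable_prod_rates[OF assms] prod_rates_eq_0_outside_reach[OF nonneg]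
    by (intro nonneg_sums_imp_has_sum_on) (auto simp: nonneg prod_nonneg)
  then have "(\<Sum>\<^sub>\<infinity>j\<in>reach lam. \<Prod>q<j. lam q) = (\<Sum>j. \<Prod>q<j. lam q)"
    by (rule infsumI)
  then show ?thesis
    unfolding stat_dist_def using prod_rates_eq_0_outside_reach[OF nonneg] by simp
qed

lemma stat_dist_nonneg: "(\<And>q. 0 \<le> lam q) \<Longrightarrow> 0 \<le> stat_dist lam i"
  by (simp add: stat_dist_def prod_nonneg infsum_nonneg)

lemma has_sum_stat_dist:
  assumes nonneg: "\<And>q. 0 \<le> lam q" and "stable lam"
  shows "(stat_dist lam has_sum 1) (reach lam)"
    and "((\<lambda>i. stat_dist lam i * lam i) has_sum (1 - stat_dist lam 0)) (reach lam)"
proof -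
  define w where "w i = (\<Prod>q<i. lam q)" for i
  define Z where "Z = (\<Sum>i. w i)"
  have w_sums: "w sums Z"
    unfolding Z_def w_def using summable_prod_rates[OF assms] by (rule summable_sums)
  have w_nonneg: "0 \<le> w i" for i
    unfolding w_def by (simp add: nonneg prod_nonneg)
  have w_outside: "w i = 0" if "i \<notin> reach lam" for i
    unfolding w_def using prod_rates_eq_0_outside_reach[OF nonneg that] .
  have pi: "stat_dist lam i = w i / Z" for i
    unfolding w_def Z_def by (rule stat_dist_eq[OF assms])
  have w_Suc: "w (Suc i) = w i * lam i" for i
    by (simp add: w_def)
  have "w 0 = 1"
    by (simp add: w_def)
  then have w_Suc_sums: "(\<lambda>i. w (Suc i)) sums (Z - 1)"
    using sums_Suc_iff[of w "Z - 1"] w_sums by simp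
  then have "1 \<le> Z"
    using sums_le[OF _ sums_zero w_Suc_sums] w_nonneg by simp
  show "(stat_dist lam has_sum 1) (reach lam)"
    unfolding pi using sums_divide[OF w_sums, of Z] \<open>1 \<le> Z\<close> w_nonneg w_outside
    by (intro nonneg_sums_imp_has_sum_on) auto
  have "((\<lambda>i. w (Suc i) / Z) has_sum ((Z - 1) / Z)) (reach lam)"
    using sums_divide[OF w_Suc_sums, of Z] \<open>1 \<le> Z\<close> w_nonneg w_outside
    by (intro nonneg_sums_imp_has_sum_on) (auto simp: w_Suc nonneg)
  moreover have "(Z - 1) / Z = 1 - stat_dist lam 0"
    using pi[of 0] \<open>w 0 = 1\<close> \<open>1 \<le> Z\<close> by (simp add: field_simps)
  ultimately show "((\<lambda>i. stat_dist lam i * lam i) has_sum (1 - stat_dist lam 0)) (reach lam)"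
    by (simp add: pi w_Suc)
qed

theorem lemmaB2:
  fixes lmax :: real and F F' :: "real \<Rightarrow> real" and x1 x2 p \<epsilon> :: real
    and lam :: "nat \<Rightarrow> real"
  assumes lmax: "lmax > 1"
    and Fnn: "\<forall>x\<in>{0..lmax}. F x \<ge> 0"
    and Fderiv: "\<forall>x\<in>{0..lmax}. (F has_real_derivative F' x) (at x within {0..lmax})"
    and F'cont: "continuous_on {0..lmax} F'"
    and F0: "F 0 = 0"
    and Flt: "\<forall>x\<in>{0..<1}. F x < Fstar lmax F"
    and F'1: "F' 1 > 0"
    and x1: "1 < x1" "x1 \<le> lmax"
    and x2: "0 \<le> x2" "x2 < 1"
    and p: "0 < p" "p < 1"
    and feas: "p * x1 + (1 - p) * x2 \<le> 1"
    and opt: "p * F x1 + (1 - p) * F x2 = Fstar lmax F"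
    and eps: "\<epsilon> > 0"
    and pol: "control_policy lmax lam"
    and stab: "stable lam"
    and reg: "regret lmax F lam \<le> \<epsilon>"
  shows "(\<Sum>\<^sub>\<infinity> i\<in>reach lam. stat_dist lam i * lam i) = 1 - stat_dist lam 0
       \<and> 1 - stat_dist lam 0 \<ge> 1 - (x1 - x2) / (F x1 - F x2) * \<epsilon>"
proof -
  have contF: "continuous_on {0..lmax} F"
    using Fderiv by (metis DERIV_continuous continuous_on_eq_continuous_within)
  interpret two_point_optimum lmax "Fstar lmax F" F x1 x2 p
    by unfold_locales (use two_point_le_Fstar[OF contF] Flt x1 x2 p feas opt in auto)
  have nonneg: "\<And>q. 0 \<le> lam q" and range: "\<And>q. lam q \<in> {0..lmax}"
    using pol by (auto simp: control_policy_def)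
  note pi = has_sum_stat_dist[OF nonneg stab]
  have chord_sum: "((\<lambda>i. stat_dist lam i * chord (lam i)) has_sum chord (1 - stat_dist lam 0)) (reach lam)"
    unfolding chord_eq_affine by (rule has_sum_affine_mean[OF pi])
  have F_le: "stat_dist lam i * F (lam i) \<le> stat_dist lam i * chord (lam i)" for i
    using F_le_chord[OF range] stat_dist_nonneg[OF nonneg] by (simp add: mult_left_mono)
  have "(\<lambda>i. stat_dist lam i * F (lam i)) summable_on reach lam"
    using Fnn range stat_dist_nonneg[OF nonneg] F_le
    by (intro summable_on_comparison_test[OF has_sum_imp_summable[OF chord_sum]]) auto
  then have "(\<Sum>\<^sub>\<infinity>i\<in>reach lam. stat_dist lam i * F (lam i)) \<le> chord (1 - stat_dist lam 0)"
    using has_sum_mono[OF has_sum_infsum chord_sum] F_le by blast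
  also have "\<dots> = Fstar lmax F - chord_slope * stat_dist lam 0"
    using chord_1 chord_eq_affine[of 1] by (simp add: chord_eq_affine algebra_simps)
  finally have "stat_dist lam 0 \<le> \<epsilon> / chord_slope"
    using reg chord_slope_pos by (simp add: regret_def field_simps)
  then show ?thesis
    using infsumI[OF pi(2)] by (simp add: chord_slope_def ac_simps)
qed

end
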